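(* (Ratio Test for Series with Unit Coefficients.) Let $\mathcal{A}$ be a finite-dimensional real associative commutative unital algebra with norm $\|\cdot\|$ and constant $m_{\mathcal{A}}>0$ such that $\|x\star y\|\le m_{\mathcal{A}}\|x\|\|y\|$ for all $x,y$. Consider a power series $\sum c_n\star(z-z_0)^n$ with $z_0\in\mathcal{A}$ and $c_n\in\mathcal{A}^\times$ for all $n$. Let $\alpha=\limsup_{n\to\infty}\left\|\frac{c_{n+1}}{c_n}\right\|$ and $R=\frac{1}{m_{\mathcal{A}}^2\alpha}$. Then $\sum c_n\star(z-z_0)^n$ is absolutely convergent for all $z$ with $z-z_0\in\mathcal{A}^\times$ and $\|z-z_0\|<R$. Moreover, if $\alpha=0$ then $\sum c_n\star(z-z_0)^n$ converges absolutely on all of $\mathcal{A}$.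
   Context: $\mathcal{A}^\times$ is the group of units of $\mathcal{A}$; $\frac{a}{b}=a\star b^{-1}$ for $b\in\mathcal{A}^\times$. Absolute convergence of $\sum a_n$ means convergence of $\sum\|a_n\|$. Convention $R=\infty$ when $\alpha=0$. *)

theory Defs
  imports "HOL-Analysis.Analysis"
begin

definition is_unit_el :: "'a::comm_ring_1 \<Rightarrow> bool" where
  "is_unit_el x \<longleftrightarrow> (\<exists>y. x * y = 1)"

definition unit_inv :: "'a::comm_ring_1 \<Rightarrow> 'a" where
  "unit_inv x = (THE y. x * y = 1)"

definition unit_div :: "'a::comm_ring_1 \<Rightarrow> 'a \<Rightarrow> 'a" where
  "unit_div a b = a * unit_inv b"

text \<open>Radius R = 1/(m^2 alpha), with the convention R = infinity when alpha = 0
  (and R = 0 when alpha = infinity).\<close>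
definition ratio_radius :: "real \<Rightarrow> ereal \<Rightarrow> ereal" where
  "ratio_radius m \<alpha> = (if \<alpha> = 0 then \<infinity> else 1 / (ereal (m\<^sup>2) * \<alpha>))"

end

theory Submission
  imports Defs
begin

text \<open>Writing \<open>q\<^sub>n = c\<^sub>n\<^sub>+\<^sub>1 / c\<^sub>n\<close> and \<open>w = z - z\<^sub>0\<close>, we have
  \<open>c\<^sub>n\<^sub>+\<^sub>1 w\<^sup>n\<^sup>+\<^sup>1 = q\<^sub>n (c\<^sub>n w\<^sup>n) w\<close>, so two applications of the norm bound give
  \<open>\<parallel>c\<^sub>n\<^sub>+\<^sub>1 w\<^sup>n\<^sup>+\<^sup>1\<parallel> \<le> m\<^sup>2 \<parallel>w\<parallel> \<parallel>q\<^sub>n\<parallel> \<parallel>c\<^sub>n w\<^sup>n\<parallel>\<close>. If \<open>\<parallel>w\<parallel> < R\<close>, there is an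
  \<open>s > \<alpha>\<close> with \<open>m\<^sup>2 \<parallel>w\<parallel> s < 1\<close>, and eventually \<open>\<parallel>q\<^sub>n\<parallel> < s\<close>; the real ratio test
  applied to the norms then gives absolute convergence.\<close>

lemma mult_unit_inv:
  fixes x :: "'a::comm_ring_1"
  assumes "is_unit_el x"
  shows "x * unit_inv x = 1"
proof -
  obtain y where y: "x * y = 1" using assms unfolding is_unit_el_def by blast
  have "\<exists>!y. x * y = 1"
  proof
    show "x * y = 1" by (rule y)
  next
    fix y' assume "x * y' = 1"
    then have "y * (x * y') = y" by simp
    then show "y' = y" using y by (simp add: mult.assoc[symmetric] mult.commute)
  qed
  then show ?thesis unfolding unit_inv_def by (rule theI')
qed

lemma unit_div_mult_cancel:
  fixes a b :: "'a::comm_ring_1"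
  assumes "is_unit_el b"
  shows "unit_div a b * b = a"
  using mult_unit_inv[OF assms] unfolding unit_div_def
  by (metis mult.assoc mult.commute mult_1_right)

lemma ratio_radius_infinity: "m \<noteq> 0 \<Longrightarrow> ratio_radius m \<infinity> = 0"
  by (simp add: ratio_radius_def)

lemma less_ratio_radius_iff:
  assumes "m > 0" "a \<ge> 0"
  shows "ereal x < ratio_radius m (ereal a) \<longleftrightarrow> m\<^sup>2 * a * x < 1"
proof (cases "a = 0")
  case False
  with assms have "m\<^sup>2 * a > 0" by simp
  moreover from False have "ratio_radius m (ereal a) = ereal (1 / (m\<^sup>2 * a))"
    using assms by (simp add: ratio_radius_def divide_ereal_def field_simps)
  ultimately show ?thesis by (simp add: field_simps mult.commute)
qed (simp add: ratio_radius_def)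

lemma exists_greater_with_scaled_less_one:
  fixes a t :: real
  assumes "t \<ge> 0" "t * a < 1"
  obtains s where "a < s" "t * s < 1"
proof
  \<comment> \<open>dividing the slack \<open>1 - t a\<close> by \<open>t + 1\<close> rather than \<open>t\<close> also covers \<open>t = 0\<close>\<close>
  define s where "s = a + (1 - t * a) / (t + 1)"
  show "a < s" unfolding s_def using assms by simp
  have "t * s = t * a + (1 - t * a) * (t / (t + 1))"
    unfolding s_def using assms by (simp add: field_simps)
  also have "\<dots> < t * a + (1 - t * a) * 1"
    using assms by (intro add_strict_left_mono mult_strict_left_mono) auto
  finally show "t * s < 1" by simp
qed

lemma summable_norm_mult_power_ratio_test:
  fixes c :: "nat \<Rightarrow> 'a::{real_normed_vector, real_algebra_1, comm_ring_1}"
    and w :: 'a and m s :: real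
  assumes m_pos: "m > 0"
    and norm_mult: "\<And>x y :: 'a. norm (x * y) \<le> m * norm x * norm y"
    and units: "\<And>n. is_unit_el (c n)"
    and limsup_less: "limsup (\<lambda>n. ereal (norm (unit_div (c (Suc n)) (c n)))) < ereal s"
    and contracting: "m\<^sup>2 * norm w * s < 1"
  shows "summable (\<lambda>n. norm (c n * w ^ n))"
proof -
  let ?q = "\<lambda>n. unit_div (c (Suc n)) (c n)"
  obtain N where N: "\<And>n. n \<ge> N \<Longrightarrow> norm (?q n) < s"
    using Limsup_lessD[OF limsup_less] unfolding eventually_sequentially by auto
  show ?thesis
  proof (rule summable_ratio_test[OF contracting])
    fix n assume "n \<ge> N"
    have step: "c (Suc n) * w ^ Suc n = ?q n * ((c n * w ^ n) * w)"
      using unit_div_mult_cancel[OF units[of n], of "c (Suc n)"]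
      by (metis mult.assoc mult.commute power_Suc2)
    have "norm (c (Suc n) * w ^ Suc n) \<le> m * norm (?q n) * norm ((c n * w ^ n) * w)"
      unfolding step by (rule norm_mult)
    also have "\<dots> \<le> m * norm (?q n) * (m * norm (c n * w ^ n) * norm w)"
      using norm_mult m_pos by (intro mult_left_mono) auto
    also have "\<dots> = (m\<^sup>2 * norm w) * norm (?q n) * norm (c n * w ^ n)"
      by (simp add: algebra_simps power2_eq_square)
    also have "\<dots> \<le> (m\<^sup>2 * norm w) * s * norm (c n * w ^ n)"
      using N[OF \<open>n \<ge> N\<close>] by (intro mult_right_mono mult_left_mono) auto
    finally show "norm (norm (c (Suc n) * w ^ Suc n))
        \<le> m\<^sup>2 * norm w * s * norm (norm (c n * w ^ n))"
      by simp
  qed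
qed

theorem theorem5p9:
  fixes c :: "nat \<Rightarrow> 'a::{real_normed_vector, real_algebra_1, comm_ring_1}"
    and z0 :: 'a and m :: real
  assumes findim: "\<exists>B. finite B \<and> span B = (UNIV :: 'a set)"
    and m_pos: "m > 0"
    and norm_mult: "\<And>x y :: 'a. norm (x * y) \<le> m * norm x * norm y"
    and units: "\<And>n. is_unit_el (c n)"
  defines "\<alpha> \<equiv> limsup (\<lambda>n. ereal (norm (unit_div (c (Suc n)) (c n))))"
  defines "R \<equiv> ratio_radius m \<alpha>"
  shows "(\<forall>z. is_unit_el (z - z0) \<and> ereal (norm (z - z0)) < R
             \<longrightarrow> summable (\<lambda>n. norm (c n * (z - z0) ^ n)))
       \<and> (\<alpha> = 0 \<longrightarrow> (\<forall>z. summable (\<lambda>n. norm (c n * (z - z0) ^ n))))"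
proof -
  have "\<alpha> \<ge> 0" unfolding \<alpha>_def by (rule le_Limsup) auto
  have summable: "summable (\<lambda>n. norm (c n * w ^ n))" if "ereal (norm w) < R" for w :: 'a
  proof -
    from \<open>ereal (norm w) < R\<close> have "\<alpha> \<noteq> \<infinity>"
      unfolding R_def using m_pos ratio_radius_infinity by auto
    with \<open>\<alpha> \<ge> 0\<close> obtain a where a: "\<alpha> = ereal a" "a \<ge> 0" by (cases \<alpha>) auto
    with \<open>ereal (norm w) < R\<close> have "(m\<^sup>2 * norm w) * a < 1"
      unfolding R_def using less_ratio_radius_iff[OF m_pos] by (simp add: ac_simps)
    then obtain s where "a < s" "m\<^sup>2 * norm w * s < 1"
      using exists_greater_with_scaled_less_one[of "m\<^sup>2 * norm w" a] by auto
    with a show ?thesis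
      using summable_norm_mult_power_ratio_test[OF m_pos norm_mult units]
      unfolding \<alpha>_def by simp
  qed
  have "R = \<infinity>" if "\<alpha> = 0" unfolding R_def ratio_radius_def using that by simp
  then show ?thesis using summable by auto
qed

end
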